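(* Let $p,q$ be integers with $2\le q<p$ and $q\mid p$, and let $s=\frac{\log q}{\log p}$. For every regular mapping $\tau:\Sigma_q^\ast\to\{-1,0,\ldots,p-2\}$, the associated set $\Lambda(\tau)$ (a regular maximal orthogonal set of $\mu_{p,q}$) satisfies \[ D_s^+(\Lambda(\tau))\le \frac{1}{\left(\frac{q-1}{2(p-1)}\right)^{s}}=\left(\frac{2(p-1)}{q-1}\right)^{s}. \] Moreover, the bound is attained by the canonical set \[ \Lambda_{p,q}=\Big\{\sum_{i=1}^{k}a_i p^{i-1}: a_i\in\{0,1,\ldots,q-1\},\ k\ge 1\Big\}, \] i.e. $D_s^+(\Lambda_{p,q})=\left(\frac{2(p-1)}{q-1}\right)^{s}$.
   Context: $\mu_{p,q}$ denotes the self-similar probability measure on $\mathbb R$ satisfying $\mu=\frac1q\sum_{d\in\mathcal D}\mu\circ f_d^{-1}$ with $f_d(x)=p^{-1}(x+d)$ and $\mathcal D=\frac pq\{0,1,\ldots,q-1\}$. Upper $r$-Beurling density: for a countable $\Lambda\subseteq\mathbb R$ and $r>0$, $D_r^+(\Lambda)=\limsup_{h\to\infty}\sup_{x\in\mathbb R}\frac{\#(\Lambda\cap B(x,h))}{h^r}$, where $B(x,h)=(x-h,x+h)$. Let $\Sigma_q=\{0,1,\ldots,q-1\}$, $\Sigma_q^n$ the words of length $n$, and $\Sigma_q^\ast=\bigcup_{n\ge1}\Sigma_q^n$. A map $\tau:\Sigma_q^\ast\to\{-1,0,\ldots,p-2\}$ is a regular mapping if (i) $\tau(0^n)=0$ for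 all $n\ge1$; (ii) $\tau(i_1\cdots i_n)\in i_n+q\mathbb Z$ for every word $i_1\cdots i_n$; (iii) for every $I\in\Sigma_q^\ast$, $\tau(I0^l)=0$ for all sufficiently large $l$. For $I=i_1\cdots i_n\in\Sigma_q^\ast$ and $k\ge1$, let $I_{1,k}=i_1\cdots i_k$ if $k\le n$ and $I_{1,k}=i_1\cdots i_n0^{k-n}$ if $k>n$, and set $\tau^\ast(I)=\sum_{k=1}^\infty \tau(I_{1,k})p^{k-1}$ (a finite sum by (iii)). Then $\Lambda(\tau)=\{\tau^\ast(I): I\in\Sigma_q^\ast\}\subseteq\mathbb Z$. (Equivalently, writing each $n\ge1$ in base $q$ as $n=i_1+i_2q+\cdots+i_Nq^{N-1}$ with $i_N\ne0$ and $I=i_1\cdots i_N$, $\lambda_n=\tau^\ast(I)$, $\lambda_0=0$, and $\Lambda(\tau)=\{\lambda_n\}_{n\ge0}$.) The canonical set $\Lambda_{p,q}$ equals $\Lambda(\tau)$ for $\tau(i_1\cdots i_n)=i_n$. *)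

theory Defs
  imports "HOL-Analysis.Analysis" "HOL-Library.Liminf_Limsup"
begin

definition upper_beurling_density :: "real \<Rightarrow> real set \<Rightarrow> ereal" where
  "upper_beurling_density r \<Lambda> =
     Limsup at_top (\<lambda>h::real. SUP x::real.
        ereal (real (card (\<Lambda> \<inter> {x - h <..< x + h})) / h powr r))"

definition words :: "nat \<Rightarrow> nat list set" where
  "words q = {I. I \<noteq> [] \<and> set I \<subseteq> {..<q}}"

definition regular_mapping :: "nat \<Rightarrow> nat \<Rightarrow> (nat list \<Rightarrow> int) \<Rightarrow> bool" where
  "regular_mapping p q \<tau> \<longleftrightarrow>
     (\<forall>I\<in>words q. \<tau> I \<in> {-1 .. int p - 2}) \<and>
     (\<forall>n\<ge>1. \<tau> (replicate n 0) = 0) \<and>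
     (\<forall>I\<in>words q. \<tau> I mod int q = int (last I) mod int q) \<and>
     (\<forall>I\<in>words q. \<exists>L. \<forall>l\<ge>L. \<tau> (I @ replicate l 0) = 0)"

definition pref :: "nat list \<Rightarrow> nat \<Rightarrow> nat list" where
  "pref I k = take k (I @ replicate k 0)"

text \<open>tau*(I) = sum_{k>=1} tau(I_{1,k}) p^(k-1); only finitely many nonzero terms
  for a regular mapping.\<close>
definition tau_star :: "nat \<Rightarrow> (nat list \<Rightarrow> int) \<Rightarrow> nat list \<Rightarrow> int" where
  "tau_star p \<tau> I = (\<Sum>k \<in> {k. k \<ge> 1 \<and> \<tau> (pref I k) \<noteq> 0}. \<tau> (pref I k) * int p ^ (k - 1))"

definition Lambda_tau :: "nat \<Rightarrow> nat \<Rightarrow> (nat list \<Rightarrow> int) \<Rightarrow> int set" where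
  "Lambda_tau p q \<tau> = tau_star p \<tau> ` words q"

definition canonical_set :: "nat \<Rightarrow> nat \<Rightarrow> int set" where
  "canonical_set p q = {(\<Sum>i<k. int (a i) * int p ^ i) | a k. k \<ge> 1 \<and> (\<forall>i<k. a i < q)}"

end

theory Submission
  imports Defs
begin

text \<open>Let \<open>c = (q - 1) / (p - 1)\<close>. Every finite \<open>S \<subseteq> \<Lambda>(\<tau>)\<close> satisfies
  \<open>#S \<le> (diam S / c + 1)\<^sup>s\<close>. Indeed, the first letter of a word is its image modulo \<open>q\<close>, so \<open>S\<close>
  splits into \<open>k \<le> q\<close> classes, each a copy of a subset of some \<open>\<Lambda>(\<tau>(j\<cdot>))\<close> scaled by \<open>p\<close>. The minima of
  the classes are distinct points of \<open>S\<close>, and so are the maxima, hence the class diameters add up to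
  at most \<open>k (diam S - (k - 1)) / p\<close>; induction on the diameter, concavity of \<open>t \<mapsto> t\<^sup>s\<close> and
  convexity of \<open>t \<mapsto> t powr (1 / s)\<close> on \<open>[1, q]\<close> close the estimate. So a window of radius \<open>h\<close> holds at most
  \<open>(2h/c + 1)\<^sup>s\<close> points, and the density is at most \<open>(2/c)\<^sup>s\<close>. In the canonical set the \<open>q\<^sup>n\<close> expansions
  with \<open>n\<close> digits lie in a window of radius \<open>(c (p\<^sup>n - 1) + 1) / 2\<close>, which attains the bound as
  \<open>n \<rightarrow> \<infinity>\<close>.\<close>

text \<open>Only conditions (ii) and (iii) of a regular mapping.\<close>
definition weakly_regular_mapping :: "nat \<Rightarrow> (nat list \<Rightarrow> int) \<Rightarrow> bool" where
  "weakly_regular_mapping q \<tau> \<longleftrightarrow>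
     (\<forall>I\<in>words q. \<tau> I mod int q = int (last I) mod int q) \<and>
     (\<forall>I\<in>words q. \<exists>L. \<forall>l\<ge>L. \<tau> (I @ replicate l 0) = 0)"

lemma regular_mapping_imp_weakly_regular:
  "regular_mapping p q \<tau> \<Longrightarrow> weakly_regular_mapping q \<tau>"
  unfolding regular_mapping_def weakly_regular_mapping_def by blast

lemma weakly_regular_mapping_Cons:
  assumes \<tau>: "weakly_regular_mapping q \<tau>" and j: "j < q"
  shows "weakly_regular_mapping q (\<lambda>J. \<tau> (j # J))"
proof -
  have "j # J \<in> words q" if "J \<in> words q" for J
    using that j unfolding words_def by auto
  moreover have "J \<noteq> []" if "J \<in> words q" for J
    using that unfolding words_def by auto
  ultimately show ?thesis
    using \<tau> unfolding weakly_regular_mapping_def by (metis append_Cons last_ConsR)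
qed

lemma pref_eq: "pref I k = take k I @ replicate (k - length I) 0"
  unfolding pref_def by (simp add: take_append min_def)

lemma pref_Cons_Suc: "pref (j # I) (Suc k) = j # pref (if I = [] then [0] else I) k"
  unfolding pref_eq by (cases k) auto

lemma tau_star_eq_sum:
  assumes \<tau>: "weakly_regular_mapping q \<tau>" and I: "I \<in> words q"
  shows "eventually (\<lambda>K. tau_star p \<tau> I = (\<Sum>k<K. \<tau> (pref I (Suc k)) * int p ^ k)) sequentially"
proof -
  obtain L where L: "\<And>l. l \<ge> L \<Longrightarrow> \<tau> (I @ replicate l 0) = 0"
    using \<tau> I unfolding weakly_regular_mapping_def by blast
  have vanish: "\<tau> (pref I k) = 0" if "k > length I + L" for k
    using L[of "k - length I"] that by (simp add: pref_eq)
  have "tau_star p \<tau> I = (\<Sum>k<K. \<tau> (pref I (Suc k)) * int p ^ k)" if K: "K \<ge> length I + L" for K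
  proof -
    have "tau_star p \<tau> I = (\<Sum>k\<in>{1..K}. \<tau> (pref I k) * int p ^ (k - 1))"
      unfolding tau_star_def
      by (rule sum.mono_neutral_left) (use vanish K in \<open>auto simp: not_less[symmetric]\<close>)
    also have "\<dots> = (\<Sum>k<K. \<tau> (pref I (Suc k)) * int p ^ k)"
      by (simp add: sum.atLeast1_atMost_eq)
    finally show ?thesis .
  qed
  then show ?thesis unfolding eventually_sequentially by blast
qed

lemma tau_star_Cons:
  assumes \<tau>: "weakly_regular_mapping q \<tau>" and I: "j # I \<in> words q"
  shows "tau_star p \<tau> (j # I)
           = \<tau> [j] + int p * tau_star p (\<lambda>J. \<tau> (j # J)) (if I = [] then [0] else I)"
    (is "_ = _ + _ * tau_star p ?\<tau>' ?I'")
proof -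
  have j: "j < q" using I unfolding words_def by auto
  have I': "?I' \<in> words q" using I j unfolding words_def by auto
  have "eventually (\<lambda>K. tau_star p \<tau> (j # I)
           = (\<Sum>k<Suc K. \<tau> (pref (j # I) (Suc k)) * int p ^ k)
         \<and> tau_star p ?\<tau>' ?I' = (\<Sum>k<K. ?\<tau>' (pref ?I' (Suc k)) * int p ^ k)) sequentially"
    using tau_star_eq_sum[OF \<tau> I, THEN eventually_sequentially_Suc[THEN iffD2]]
      tau_star_eq_sum[OF weakly_regular_mapping_Cons[OF \<tau> j] I']
    by eventually_elim blast
  then obtain K where
    K1: "tau_star p \<tau> (j # I) = (\<Sum>k<Suc K. \<tau> (pref (j # I) (Suc k)) * int p ^ k)" and
    K2: "tau_star p ?\<tau>' ?I' = (\<Sum>k<K. ?\<tau>' (pref ?I' (Suc k)) * int p ^ k)"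
    using eventually_happens'[OF trivial_limit_sequentially] by blast
  have "tau_star p \<tau> (j # I)
          = \<tau> (pref (j # I) 1) + (\<Sum>k<K. \<tau> (pref (j # I) (Suc (Suc k))) * int p ^ Suc k)"
    unfolding K1 by (subst sum.lessThan_Suc_shift) simp
  also have "\<dots> = \<tau> [j] + int p * (\<Sum>k<K. ?\<tau>' (pref ?I' (Suc k)) * int p ^ k)"
    by (simp only: pref_Cons_Suc sum_distrib_left) (simp add: pref_def mult_ac)
  finally show ?thesis unfolding K2 .
qed

lemma tau_star_image_Cons:
  assumes \<tau>: "weakly_regular_mapping q \<tau>" and x: "x \<in> tau_star p \<tau> ` words q"
  obtains j y where "j < q" "y \<in> tau_star p (\<lambda>J. \<tau> (j # J)) ` words q" "x = \<tau> [j] + int p * y"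
proof -
  obtain j I where I: "j # I \<in> words q" "x = tau_star p \<tau> (j # I)"
    using x unfolding words_def by (auto simp: neq_Nil_conv)
  have "j < q" "(if I = [] then [0] else I) \<in> words q"
    using I unfolding words_def by auto
  then show ?thesis using that tau_star_Cons[OF \<tau> I(1)] I(2) by blast
qed

lemma digit_mod:
  assumes \<tau>: "weakly_regular_mapping q \<tau>" and j: "j < q" and "q dvd p"
  shows "(\<tau> [j] + int p * y) mod int q = int j"
proof -
  have "[j] \<in> words q" using j unfolding words_def by auto
  then have "\<tau> [j] mod int q = int j"
    using \<tau> j unfolding weakly_regular_mapping_def by auto
  moreover have "int q dvd int p * y" using \<open>q dvd p\<close> by simp
  ultimately show ?thesis by (simp add: mod_add_right_eq[symmetric])
qed

lemma sum_powr_le_card_mult_mean_powr: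
  fixes u :: "'a \<Rightarrow> real"
  assumes A: "finite A" "A \<noteq> {}" and u: "\<And>j. j \<in> A \<Longrightarrow> u j > 0" and s: "0 \<le> s" "s \<le> 1"
  shows "(\<Sum>j\<in>A. u j powr s) \<le> card A * ((\<Sum>j\<in>A. u j) / card A) powr s"
proof -
  define m where "m = (\<Sum>j\<in>A. u j) / card A"
  have cA: "card A > 0" using A by (simp add: card_gt_0_iff)
  have m: "m > 0"
    unfolding m_def using A u cA by (intro divide_pos_pos sum_pos) auto
  have tangent: "u j powr s \<le> (s * u j + (1 - s) * m) / m powr (1 - s)" if "j \<in> A" for j
  proof -
    have "u j powr s * m powr (1 - s) \<le> s * u j + (1 - s) * m"
      by (rule Youngs_inequality_0) (use s u that m in auto)
    then show ?thesis using m by (simp add: pos_le_divide_eq)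
  qed
  have "(\<Sum>j\<in>A. u j powr s) \<le> (\<Sum>j\<in>A. (s * u j + (1 - s) * m) / m powr (1 - s))"
    by (rule sum_mono) (rule tangent)
  also have "\<dots> = (s * (\<Sum>j\<in>A. u j) + (1 - s) * m * card A) / m powr (1 - s)"
    by (simp add: sum_divide_distrib[symmetric] sum.distrib sum_distrib_left)
  also have "\<dots> = card A * (m / m powr (1 - s))"
    using cA by (simp add: m_def field_simps)
  also have "m / m powr (1 - s) = m powr s"
    using m by (simp add: powr_diff)
  finally show ?thesis by (simp add: m_def)
qed

text \<open>The chord of the convex function \<open>x \<mapsto> x powr (ln p / ln q)\<close> through \<open>(1, 1)\<close> and \<open>(q, p)\<close>.\<close>
lemma powr_ln_ratio_le_chord:
  fixes p q k :: nat
  assumes "2 \<le> q" "q < p" "1 \<le> k" "k \<le> q"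
  shows "real k powr (ln p / ln q) \<le> 1 + (real k - 1) * (real p - 1) / (real q - 1)"
proof -
  define a where "a = ln (real p) / ln (real q)"
  have "ln (real q) > 0" "ln (real q) < ln (real p)" using assms by simp_all
  then have "a \<ge> 1" by (simp add: a_def)
  then have "convex_on {1..real q} (\<lambda>x. x powr a)"
    by (rule convex_on_subset[OF powr_convex]) auto
  moreover have "real q powr a = real p"
    using \<open>ln (real q) > 0\<close> assms by (simp add: a_def powr_def)
  ultimately show ?thesis
    using convex_onD_Icc'[of 1 "real q" "\<lambda>x. x powr a" "real k"] assms
    by (simp add: a_def mult_ac)
qed

text \<open>Write \<open>k = K\<^sup>s\<close>: then \<open>K \<le> p\<close>, and \<open>K\<close> lies below the chord, i.e. \<open>K \<le> 1 + (k - 1) / c\<close>.\<close>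
lemma card_mult_scaled_powr_le:
  fixes p q k :: nat and L :: real
  assumes q: "2 \<le> q" "q < p" and k: "1 \<le> k" "k \<le> q" and L: "real k - 1 \<le> L"
  defines "s \<equiv> ln (real q) / ln (real p)" and "c \<equiv> (real q - 1) / (real p - 1)"
  shows "real k * ((L - (real k - 1)) / real p / c + 1) powr s \<le> (L / c + 1) powr s"
proof -
  have lq: "ln (real q) > 0" and lp: "ln (real p) > 0" using q by simp_all
  have c: "c > 0" using q by (simp add: c_def)
  define K where "K = real k powr (ln p / ln q)"
  have Kk: "K powr s = real k"
    using lq lp k by (simp add: K_def powr_powr s_def)
  have Kc: "K \<le> 1 + (real k - 1) / c"
    using powr_ln_ratio_le_chord[OF q k] by (simp add: K_def c_def)
  have "K \<le> real q powr (ln p / ln q)"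
    unfolding K_def using k lq lp by (intro powr_mono2) auto
  also have "\<dots> = real p" using lq q by (simp add: powr_def)
  finally have Kp: "K \<le> real p" .
  define X where "X = (L - (real k - 1)) / c"
  have X: "X \<ge> 0" using L c by (simp add: X_def)
  have "K * (X / real p + 1) = (K / real p) * X + K"
    by (simp add: field_simps)
  also have "\<dots> \<le> 1 * X + (1 + (real k - 1) / c)"
    using Kp q X Kc by (intro add_mono mult_right_mono) (simp_all add: divide_le_eq)
  also have "\<dots> = L / c + 1" using c by (simp add: X_def field_simps)
  finally have main: "K * (X / real p + 1) \<le> L / c + 1" .
  have "X / real p + 1 \<ge> 0" using X q by simp
  then have "real k * ((L - (real k - 1)) / real p / c + 1) powr s = (K * (X / real p + 1)) powr s"
    by (simp add: K_def powr_mult Kk[unfolded K_def] X_def mult.commute)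
  also have "\<dots> \<le> (L / c + 1) powr s"
    using main \<open>X / real p + 1 \<ge> 0\<close> lq lp by (intro powr_mono2) (auto simp: K_def s_def)
  finally show ?thesis .
qed

lemma sum_card_less_eq_sum_lessThan:
  fixes f :: "'a \<Rightarrow> 'b :: linorder"
  assumes A: "finite A" and f: "inj_on f A"
  shows "(\<Sum>j\<in>A. card {i\<in>A. f i < f j}) = (\<Sum>i<card A. i)"
proof -
  define r where "r j = card {i\<in>A. f i < f j}" for j
  have r_less: "r i < r j" if "i \<in> A" "j \<in> A" "f i < f j" for i j
    unfolding r_def using that A by (intro psubset_card_mono) auto
  have "inj_on r A"
    by (rule inj_onI) (metis f inj_on_contraD less_irrefl linorder_neqE r_less)
  moreover have "r ` A = {..<card A}"
  proof (rule card_subset_eq)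
    show "r ` A \<subseteq> {..<card A}"
      unfolding r_def using A by (auto intro!: psubset_card_mono)
  qed (use \<open>inj_on r A\<close> in \<open>simp_all add: card_image\<close>)
  ultimately have "(\<Sum>j\<in>A. r j) = (\<Sum>i<card A. i)"
    by (metis sum.reindex_cong)
  then show ?thesis unfolding r_def .
qed

lemma card_less_le_diff:
  fixes f :: "'a \<Rightarrow> int"
  assumes f: "inj_on f A" and lo: "\<And>i. i \<in> A \<Longrightarrow> lo \<le> f i" and "lo \<le> x"
  shows "int (card {i\<in>A. f i < x}) \<le> x - lo"
proof -
  have "card {i\<in>A. f i < x} = card (f ` {i\<in>A. f i < x})"
    by (rule card_image[symmetric]) (rule inj_on_subset[OF f], auto)
  also have "\<dots> \<le> card {lo..<x}"
    using lo by (intro card_mono) auto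
  finally show ?thesis using \<open>lo \<le> x\<close> by simp
qed

text \<open>Intervals \<open>[a j, b j] \<subseteq> [lo, hi]\<close> with pairwise distinct left and pairwise distinct right
  endpoints: the \<open>n\<close>-th smallest left endpoint is at least \<open>lo + n\<close>, symmetrically on the right.\<close>
lemma sum_interval_lengths_le:
  fixes a b :: "'a \<Rightarrow> int"
  assumes J: "finite J" and a: "inj_on a J" and b: "inj_on b J"
    and bounds: "\<And>j. j \<in> J \<Longrightarrow> lo \<le> a j \<and> b j \<le> hi"
  shows "(\<Sum>j\<in>J. b j - a j) \<le> int (card J) * (hi - lo) - int (card J) * (int (card J) - 1)"
proof -
  have b': "inj_on (\<lambda>j. - b j) J" using b by (simp add: inj_on_def)
  have gauss: "2 * int (\<Sum>i<n. i) = int n * (int n - 1)" for n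
    by (induction n) (simp_all add: algebra_simps)
  have rank_a: "int (card {i\<in>J. a i < a j}) \<le> a j - lo" if "j \<in> J" for j
    using card_less_le_diff[OF a] bounds that by blast
  have rank_b: "int (card {i\<in>J. b j < b i}) \<le> hi - b j" if "j \<in> J" for j
    using card_less_le_diff[OF b', of "- hi" "- b j"] bounds that by simp
  have sum_b: "(\<Sum>j\<in>J. card {i\<in>J. b j < b i}) = (\<Sum>i<card J. i)"
    using sum_card_less_eq_sum_lessThan[OF J b'] by simp
  have "int (card J) * (int (card J) - 1)
          = (\<Sum>j\<in>J. int (card {i\<in>J. a i < a j}) + int (card {i\<in>J. b j < b i}))"
    by (simp add: sum.distrib sum_card_less_eq_sum_lessThan[OF J a] sum_b
        flip: of_nat_sum gauss)
  also have "\<dots> \<le> (\<Sum>j\<in>J. (a j - lo) + (hi - b j))"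
    using rank_a rank_b by (intro sum_mono add_mono)
  finally show ?thesis
    by (simp add: sum.distrib sum_subtractf algebra_simps)
qed

definition digit_part :: "nat \<Rightarrow> nat \<Rightarrow> (nat list \<Rightarrow> int) \<Rightarrow> int set \<Rightarrow> nat \<Rightarrow> int set" where
  "digit_part p q \<tau> S j = {y \<in> tau_star p (\<lambda>J. \<tau> (j # J)) ` words q. \<tau> [j] + int p * y \<in> S}"

lemma finite_digit_part:
  assumes "0 < p" "finite S"
  shows "finite (digit_part p q \<tau> S j)"
proof -
  have "inj (\<lambda>y. \<tau> [j] + int p * y)" using \<open>0 < p\<close> by (auto intro: injI)
  then have "finite ((\<lambda>y. \<tau> [j] + int p * y) -` S)" using \<open>finite S\<close> finite_vimageI by blast
  then show ?thesis by (rule rev_finite_subset) (auto simp: digit_part_def)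
qed

lemma card_eq_sum_card_digit_part:
  assumes \<tau>: "weakly_regular_mapping q \<tau>" and p: "q dvd p" "0 < p"
    and S: "finite S" "S \<subseteq> tau_star p \<tau> ` words q"
  shows "card S = (\<Sum>j\<in>{j. j < q \<and> digit_part p q \<tau> S j \<noteq> {}}. card (digit_part p q \<tau> S j))"
proof -
  define g where "g j y = \<tau> [j] + int p * y" for j y
  have "S = (\<Union>j<q. g j ` digit_part p q \<tau> S j)"
  proof (intro equalityI subsetI)
    fix x assume "x \<in> S"
    with S obtain j y where "j < q" "y \<in> tau_star p (\<lambda>J. \<tau> (j # J)) ` words q" "x = g j y"
      unfolding g_def using tau_star_image_Cons[OF \<tau>] by blast
    with \<open>x \<in> S\<close> show "x \<in> (\<Union>j<q. g j ` digit_part p q \<tau> S j)"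
      unfolding digit_part_def g_def by auto
  qed (auto simp: digit_part_def g_def)
  also have "card \<dots> = (\<Sum>j<q. card (g j ` digit_part p q \<tau> S j))"
  proof (rule card_UN_disjoint)
    show "\<forall>j\<in>{..<q}. finite (g j ` digit_part p q \<tau> S j)"
      using finite_digit_part[OF p(2) S(1)] by blast
    show "\<forall>i\<in>{..<q}. \<forall>j\<in>{..<q}. i \<noteq> j \<longrightarrow>
            g i ` digit_part p q \<tau> S i \<inter> g j ` digit_part p q \<tau> S j = {}"
    proof (intro ballI impI equals0I)
      fix i j z assume ij: "i \<in> {..<q}" "j \<in> {..<q}" "i \<noteq> j"
        and "z \<in> g i ` digit_part p q \<tau> S i \<inter> g j ` digit_part p q \<tau> S j"
      then obtain y y' where "z = g i y" "z = g j y'" by blast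
      then have "int i = int j"
        using digit_mod[OF \<tau> _ p(1)] ij unfolding g_def by (metis lessThan_iff)
      with ij show False by simp
    qed
  qed simp
  also have "\<dots> = (\<Sum>j<q. card (digit_part p q \<tau> S j))"
    using p(2) by (intro sum.cong refl card_image) (auto simp: g_def inj_on_def)
  also have "\<dots> = (\<Sum>j\<in>{j. j < q \<and> digit_part p q \<tau> S j \<noteq> {}}. card (digit_part p q \<tau> S j))"
    by (rule sum.mono_neutral_right) auto
  finally show ?thesis .
qed

lemma digit_part_Min_Max_mem:
  assumes "0 < p" "finite S" "digit_part p q \<tau> S j \<noteq> {}"
  shows "\<tau> [j] + int p * Min (digit_part p q \<tau> S j) \<in> S"
    and "\<tau> [j] + int p * Max (digit_part p q \<tau> S j) \<in> S"
  using Min_in[OF finite_digit_part[OF assms(1,2)] assms(3)]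
    Max_in[OF finite_digit_part[OF assms(1,2)] assms(3)]
  by (auto simp: digit_part_def)

lemma digit_part_diameter_le:
  assumes "0 < p" "finite S" "digit_part p q \<tau> S j \<noteq> {}"
  shows "int p * (Max (digit_part p q \<tau> S j) - Min (digit_part p q \<tau> S j)) \<le> Max S - Min S"
  using Max_ge[OF assms(2) digit_part_Min_Max_mem(2)[OF assms]]
    Min_le[OF assms(2) digit_part_Min_Max_mem(1)[OF assms]]
  by (simp add: algebra_simps)

text \<open>The least points of the nonempty parts are distinct points of \<open>S\<close> (they differ modulo \<open>q\<close>),
  and so are the greatest points.\<close>
lemma sum_digit_part_diameters_le:
  assumes \<tau>: "weakly_regular_mapping q \<tau>" and p: "q dvd p" "0 < p" and S: "finite S"
  defines "D \<equiv> digit_part p q \<tau> S" and "J \<equiv> {j. j < q \<and> digit_part p q \<tau> S j \<noteq> {}}"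
  shows "int p * (\<Sum>j\<in>J. Max (D j) - Min (D j))
           \<le> int (card J) * (Max S - Min S) - int (card J) * (int (card J) - 1)"
proof -
  define lo where "lo j = \<tau> [j] + int p * Min (D j)" for j
  define hi where "hi j = \<tau> [j] + int p * Max (D j)" for j
  have mem: "lo j \<in> S" "hi j \<in> S" if "j \<in> J" for j
    using digit_part_Min_Max_mem[OF p(2) S] that unfolding lo_def hi_def J_def D_def by auto
  have "inj_on lo J" "inj_on hi J"
    using digit_mod[OF \<tau> _ p(1)] unfolding inj_on_def J_def lo_def hi_def
    by (metis mem_Collect_eq of_nat_eq_iff)+
  then have "(\<Sum>j\<in>J. hi j - lo j) \<le> int (card J) * (Max S - Min S) - int (card J) * (int (card J) - 1)"
    using mem S by (intro sum_interval_lengths_le) (auto simp: J_def)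
  then show ?thesis
    by (simp add: sum_distrib_left lo_def hi_def algebra_simps)
qed

lemma sum_powr_le_of_sum_diameters:
  fixes p q :: nat and d :: "'a \<Rightarrow> real" and L :: real
  assumes q: "2 \<le> q" "q < p" and J: "finite J" "1 \<le> card J" "card J \<le> q"
    and d: "\<And>j. j \<in> J \<Longrightarrow> 0 \<le> d j"
    and sum_d: "real p * (\<Sum>j\<in>J. d j) \<le> real (card J) * (L - (real (card J) - 1))"
  defines "s \<equiv> ln (real q) / ln (real p)" and "c \<equiv> (real q - 1) / (real p - 1)"
  shows "(\<Sum>j\<in>J. (d j / c + 1) powr s) \<le> (L / c + 1) powr s"
proof -
  define k where "k = card J"
  have p: "0 < p" and s: "0 < s" "s \<le> 1" and c: "c > 0"
    using q by (simp_all add: s_def c_def)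
  have sum_d_nonneg: "0 \<le> (\<Sum>j\<in>J. d j)" using d by (simp add: sum_nonneg)
  have "0 \<le> real k * (L - (real k - 1))"
    using sum_d sum_d_nonneg p unfolding k_def by (meson mult_nonneg_nonneg of_nat_0_le_iff order.trans)
  then have L: "real k - 1 \<le> L"
    using J by (auto simp: k_def zero_le_mult_iff)
  have k0: "real k > 0" using J by (simp add: k_def)
  have mean: "(\<Sum>j\<in>J. d j / c + 1) / k = (\<Sum>j\<in>J. d j) / (c * k) + 1"
    using k0 c by (simp add: sum.distrib k_def field_simps flip: sum_divide_distrib)
  also have "\<dots> \<le> (real k * (L - (real k - 1)) / real p) / (c * k) + 1"
    using sum_d J c p unfolding k_def
    by (intro add_right_mono divide_right_mono) (simp_all add: pos_le_divide_eq mult.commute)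
  also have "\<dots> = (L - (real k - 1)) / real p / c + 1"
    using k0 c by simp
  finally have mean_le: "(\<Sum>j\<in>J. d j / c + 1) / k \<le> (L - (real k - 1)) / real p / c + 1" .
  have "(\<Sum>j\<in>J. (d j / c + 1) powr s) \<le> k * ((\<Sum>j\<in>J. d j / c + 1) / k) powr s"
    unfolding k_def using J s c d
    by (intro sum_powr_le_card_mult_mean_powr) (auto intro: add_nonneg_pos)
  also have "\<dots> \<le> k * ((L - (real k - 1)) / real p / c + 1) powr s"
    using mean_le mean sum_d_nonneg s c
    by (intro mult_left_mono powr_mono2) (auto intro!: divide_nonneg_nonneg)
  also have "\<dots> \<le> (L / c + 1) powr s"
    unfolding s_def c_def using q J L by (intro card_mult_scaled_powr_le) (auto simp: k_def)
  finally show ?thesis .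
qed

lemma card_le_diameter_powr:
  fixes p q :: nat
  assumes q: "2 \<le> q" "q < p" "q dvd p"
    and \<tau>: "weakly_regular_mapping q \<tau>"
    and S: "finite S" "S \<noteq> {}" "S \<subseteq> tau_star p \<tau> ` words q"
  defines "s \<equiv> ln (real q) / ln (real p)" and "c \<equiv> (real q - 1) / (real p - 1)"
  shows "real (card S) \<le> (real_of_int (Max S - Min S) / c + 1) powr s"
  using \<tau> S
proof (induction "nat (Max S - Min S)" arbitrary: \<tau> S rule: less_induct)
  case less
  have p: "0 < p" using q by simp
  define L where "L = Max S - Min S"
  show ?case
  proof (cases "L = 0")
    case True
    have "x = Min S" if "x \<in> S" for x
      using Min_le[OF less.prems(2) that] Max_ge[OF less.prems(2) that] True by (simp add: L_def)
    then have "S = {Min S}" using Min_in[OF less.prems(2,3)] by blast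
    then have "card S = 1" by (metis is_singletonI is_singleton_altdef)
    then show ?thesis by (simp flip: L_def add: True)
  next
    case False
    define D where "D = digit_part p q \<tau> S"
    define J where "J = {j. j < q \<and> D j \<noteq> {}}"
    define span where "span j = Max (D j) - Min (D j)" for j
    have finD: "finite (D j)" for j
      unfolding D_def using finite_digit_part[OF p] less.prems by blast
    have J: "finite J" "J \<subseteq> {..<q}" unfolding J_def by auto
    have "card S = (\<Sum>j\<in>J. card (D j))"
      unfolding D_def J_def using card_eq_sum_card_digit_part[OF less.prems(1) q(3) p] less.prems by blast
    then have card_S: "real (card S) = (\<Sum>j\<in>J. real (card (D j)))" by simp
    have card_J: "1 \<le> card J" "card J \<le> q"
      using card_S less.prems J card_mono[OF _ J(2)] by (auto simp: Suc_le_eq card_gt_0_iff)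
    have "int p * (\<Sum>j\<in>J. span j) \<le> int (card J) * L - int (card J) * (int (card J) - 1)"
      unfolding span_def D_def J_def L_def using q(3) p less.prems
      by (intro sum_digit_part_diameters_le) auto
    then have "real_of_int (int p * (\<Sum>j\<in>J. span j))
                 \<le> real_of_int (int (card J) * L - int (card J) * (int (card J) - 1))"
      by (simp only: of_int_le_iff)
    then have sum_span: "real p * (\<Sum>j\<in>J. real_of_int (span j))
                           \<le> real (card J) * (L - (real (card J) - 1))"
      by (simp add: algebra_simps)
    have card_D: "real (card (D j)) \<le> (real_of_int (span j) / c + 1) powr s" if "j \<in> J" for j
      unfolding span_def
    proof (rule less.hyps)
      have span0: "0 \<le> span j" using that finD by (auto simp: J_def span_def)
      then have "2 * span j \<le> int p * span j" using q by (intro mult_right_mono) auto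
      also have "\<dots> \<le> L"
        unfolding span_def D_def L_def using that less.prems q(3) p
        by (intro digit_part_diameter_le) (auto simp: J_def D_def)
      finally show "nat (Max (D j) - Min (D j)) < nat (Max S - Min S)"
        using False span0 less.prems(2,3) by (simp add: L_def span_def)
      show "weakly_regular_mapping q (\<lambda>J. \<tau> (j # J))"
        using weakly_regular_mapping_Cons[OF less.prems(1)] that J_def by blast
    qed (use that finD in \<open>auto simp: J_def D_def digit_part_def\<close>)
    have "real (card S) \<le> (\<Sum>j\<in>J. (real_of_int (span j) / c + 1) powr s)"
      unfolding card_S by (intro sum_mono card_D)
    also have "\<dots> \<le> (real_of_int L / c + 1) powr s"
      unfolding s_def c_def using q J card_J sum_span finD
      by (intro sum_powr_le_of_sum_diameters) (auto simp: span_def J_def)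
    finally show ?thesis unfolding L_def .
  qed
qed

lemma card_window_le_powr:
  fixes p q :: nat
  assumes q: "2 \<le> q" "q < p" "q dvd p"
    and \<tau>: "weakly_regular_mapping q \<tau>" and \<Lambda>: "\<Lambda> \<subseteq> tau_star p \<tau> ` words q"
  defines "s \<equiv> ln (real q) / ln (real p)" and "c \<equiv> (real q - 1) / (real p - 1)"
  shows "real (card (real_of_int ` \<Lambda> \<inter> {x - h <..< x + h})) \<le> (2 * h / c + 1) powr s"
proof -
  define S where "S = {z \<in> \<Lambda>. x - h < real_of_int z \<and> real_of_int z < x + h}"
  have "real_of_int ` \<Lambda> \<inter> {x - h <..< x + h} = real_of_int ` S" unfolding S_def by auto
  then have card: "card (real_of_int ` \<Lambda> \<inter> {x - h <..< x + h}) = card S"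
    by (simp add: card_image inj_on_def)
  have "S \<subseteq> {\<lfloor>x - h\<rfloor>..\<lceil>x + h\<rceil>}" unfolding S_def by (auto simp: floor_le_iff le_ceiling_iff)
  then have finS: "finite S" by (rule finite_subset) simp
  show ?thesis
  proof (cases "S = {}")
    case True
    then show ?thesis by (simp add: card)
  next
    case False
    have c: "c > 0" using q by (simp add: c_def)
    have "Max S \<in> S" "Min S \<in> S" using finS False by simp_all
    then have "real_of_int (Max S - Min S) \<le> 2 * h" unfolding S_def by auto
    moreover have "Min S \<le> Max S" using finS False by simp
    ultimately have "real_of_int (Max S - Min S) / c + 1 \<le> 2 * h / c + 1"
      using c by (simp add: divide_right_mono)
    then have "(real_of_int (Max S - Min S) / c + 1) powr s \<le> (2 * h / c + 1) powr s"
      using c \<open>Min S \<le> Max S\<close> q by (intro powr_mono2) (simp_all add: s_def)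
    moreover have "real (card S) \<le> (real_of_int (Max S - Min S) / c + 1) powr s"
      unfolding s_def c_def using finS False \<Lambda>
      by (intro card_le_diameter_powr[OF q \<tau>]) (auto simp: S_def)
    ultimately show ?thesis by (simp add: card)
  qed
qed

lemma upper_beurling_density_le:
  fixes p q :: nat
  assumes q: "2 \<le> q" "q < p" "q dvd p"
    and \<tau>: "weakly_regular_mapping q \<tau>" and \<Lambda>: "\<Lambda> \<subseteq> tau_star p \<tau> ` words q"
  defines "s \<equiv> ln (real q) / ln (real p)"
  shows "upper_beurling_density s (real_of_int ` \<Lambda>)
           \<le> ereal ((2 * (real p - 1) / (real q - 1)) powr s)"
proof -
  define c where "c = (real q - 1) / (real p - 1)"
  define C where "C = 2 * (real p - 1) / (real q - 1)"
  have c: "c > 0" and C: "C > 0" and "2 / c = C" using q by (simp_all add: c_def C_def)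
  have window: "real (card (real_of_int ` \<Lambda> \<inter> {x - h <..< x + h})) / h powr s \<le> (C + 1 / h) powr s"
    if "h > 0" for h x
  proof -
    have "real (card (real_of_int ` \<Lambda> \<inter> {x - h <..< x + h})) / h powr s
            \<le> (2 * h / c + 1) powr s / h powr s"
      unfolding s_def c_def by (intro divide_right_mono card_window_le_powr[OF q \<tau> \<Lambda>]) simp
    also have "\<dots> = ((2 * h / c + 1) / h) powr s" using that c by (simp add: powr_divide)
    also have "(2 * h / c + 1) / h = C + 1 / h" using that c \<open>2 / c = C\<close> by (simp add: field_simps)
    finally show ?thesis .
  qed
  have "eventually (\<lambda>h. (SUP x. ereal (real (card (real_of_int ` \<Lambda> \<inter> {x - h <..< x + h})) / h powr s))
          \<le> ereal ((C + 1 / h) powr s)) at_top"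
    using eventually_gt_at_top[of "0::real"] by eventually_elim (auto intro!: SUP_least window)
  then have "upper_beurling_density s (real_of_int ` \<Lambda>) \<le> Limsup at_top (\<lambda>h. ereal ((C + 1 / h) powr s))"
    unfolding upper_beurling_density_def by (rule Limsup_mono)
  also have "\<dots> = ereal (C powr s)"
  proof (intro lim_imp_Limsup tendsto_ereal)
    have "((\<lambda>h::real. C + 1 / h) \<longlongrightarrow> C + 0) at_top"
      by (intro tendsto_intros tendsto_divide_0[OF tendsto_const] filterlim_at_top_imp_at_infinity
          filterlim_ident)
    then show "((\<lambda>h. (C + 1 / h) powr s) \<longlongrightarrow> C powr s) at_top"
      using C by (intro tendsto_powr) auto
  qed simp
  finally show ?thesis unfolding C_def .
qed

definition last_letter_mapping :: "nat list \<Rightarrow> int" where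
  "last_letter_mapping I = int (last I)"

lemma regular_mapping_last_letter:
  assumes "q < p"
  shows "regular_mapping p q last_letter_mapping"
  unfolding regular_mapping_def last_letter_mapping_def
proof (intro conjI ballI allI impI)
  fix I assume "I \<in> words q"
  then have "last I < q" unfolding words_def by (auto intro: last_in_set)
  then show "int (last I) \<in> {- 1..int p - 2}" using assms by auto
  show "\<exists>L. \<forall>l\<ge>L. int (last (I @ replicate l 0)) = 0"
    by (rule exI[of _ 1]) auto
qed (auto simp: neq_Nil_conv)

lemma canonical_set_subset_Lambda_tau:
  assumes "q < p"
  shows "canonical_set p q \<subseteq> Lambda_tau p q last_letter_mapping"
proof
  fix z assume "z \<in> canonical_set p q"
  then obtain a k where z: "z = (\<Sum>i<k. int (a i) * int p ^ i)" and k: "k \<ge> 1" "\<forall>i<k. a i < q"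
    unfolding canonical_set_def by blast
  define I where "I = map a [0..<k]"
  have I: "I \<in> words q" using k unfolding I_def words_def by auto
  have letter: "last_letter_mapping (pref I (Suc i)) = (if i < k then int (a i) else 0)" for i
    by (simp add: last_letter_mapping_def pref_eq I_def last_conv_nth take_map nth_append)
  obtain K where K_ge: "K \<ge> k"
    and K: "tau_star p last_letter_mapping I = (\<Sum>i<K. last_letter_mapping (pref I (Suc i)) * int p ^ i)"
    using tau_star_eq_sum[OF regular_mapping_imp_weakly_regular[OF regular_mapping_last_letter[OF assms]] I,
        unfolded eventually_sequentially] by (metis le_add1 add.commute)
  have "tau_star p last_letter_mapping I = (\<Sum>i<k. last_letter_mapping (pref I (Suc i)) * int p ^ i)"
    unfolding K using K_ge by (intro sum.mono_neutral_right) (auto simp: letter)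
  then have "tau_star p last_letter_mapping I = z"
    unfolding z by (simp add: letter)
  then show "z \<in> Lambda_tau p q last_letter_mapping" unfolding Lambda_tau_def using I by blast
qed

fun expansions :: "nat \<Rightarrow> nat \<Rightarrow> nat \<Rightarrow> int set" where
  "expansions p q 0 = {0}"
| "expansions p q (Suc n) = (\<lambda>(d, y). int d + int p * y) ` ({..<q} \<times> expansions p q n)"

lemma card_expansions:
  assumes "q \<le> p"
  shows "finite (expansions p q n) \<and> card (expansions p q n) = q ^ n"
proof (induction n)
  case (Suc n)
  have "inj_on (\<lambda>(d, y). int d + int p * y) ({..<q} \<times> expansions p q n)"
  proof (rule inj_onI, clarify)
    fix d y d' y' assume "d < q" "d' < q" and eq: "int d + int p * y = int d' + int p * y'"
    then have "d < p" "d' < p" using assms by simp_all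
    have "int d = (int d + int p * y) mod int p" using \<open>d < p\<close> by simp
    also have "\<dots> = int d'" using eq \<open>d' < p\<close> by simp
    finally have "d = d'" by simp
    with eq \<open>d < p\<close> show "d = d' \<and> y = y'" by simp
  qed
  then show ?case using Suc by (simp add: card_image card_cartesian_product)
qed simp

lemma expansions_bounds:
  assumes "2 \<le> q" "q < p" and "z \<in> expansions p q n"
  shows "0 \<le> z \<and> real_of_int z \<le> (real q - 1) / (real p - 1) * (real p ^ n - 1)"
  using assms(3)
proof (induction n arbitrary: z)
  case (Suc n)
  then obtain d y where d: "d < q" and y: "y \<in> expansions p q n" and z: "z = int d + int p * y"
    by auto
  note IH = Suc.IH[OF y]
  have "real_of_int z = real d + real p * real_of_int y" using z by simp
  also have "\<dots> \<le> (real q - 1) + real p * ((real q - 1) / (real p - 1) * (real p ^ n - 1))"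
    using d IH assms by (intro add_mono mult_left_mono) auto
  also have "\<dots> = (real q - 1) / (real p - 1) * (real p ^ Suc n - 1)"
    using assms by (simp add: field_simps)
  finally show ?case using IH z by simp
qed simp

lemma expansions_subset_canonical_set:
  assumes "n \<ge> 1"
  shows "expansions p q n \<subseteq> canonical_set p q"
proof -
  have "\<exists>a. (\<forall>i<n. a i < q) \<and> z = (\<Sum>i<n. int (a i) * int p ^ i)" if "z \<in> expansions p q n" for z
    using that
  proof (induction n arbitrary: z)
    case (Suc n)
    then obtain d y where d: "d < q" and y: "y \<in> expansions p q n" and z: "z = int d + int p * y"
      by auto
    obtain a where a: "\<forall>i<n. a i < q" "y = (\<Sum>i<n. int (a i) * int p ^ i)"
      using Suc.IH[OF y] by blast
    define b where "b i = (case i of 0 \<Rightarrow> d | Suc j \<Rightarrow> a j)" for i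
    have "\<forall>i<Suc n. b i < q" using a d by (auto simp: b_def split: nat.split)
    moreover have "z = (\<Sum>i<Suc n. int (b i) * int p ^ i)"
      unfolding sum.lessThan_Suc_shift z a by (simp add: b_def sum_distrib_left mult_ac)
    ultimately show ?case by blast
  qed simp
  then show ?thesis using assms unfolding canonical_set_def by blast
qed

lemma Limsup_ge_limit_along:
  fixes f :: "'a \<Rightarrow> 'c :: {complete_linorder, linorder_topology}"
  assumes h: "filterlim h F G" and G: "G \<noteq> bot"
    and lim: "(a \<longlongrightarrow> l) G" and le: "eventually (\<lambda>n. a n \<le> f (h n)) G"
  shows "l \<le> Limsup F f"
proof -
  have "l = Limsup G a" using lim_imp_Limsup[OF G lim] ..
  also have "\<dots> \<le> Limsup G (\<lambda>n. f (h n))" using le by (rule Limsup_mono)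
  also have "\<dots> \<le> Limsup (filtermap h G) f" by (rule Limsup_filtermap_ge)
  also have "\<dots> \<le> Limsup F f"
    using h unfolding Limsup_def filterlim_def le_filter_def by (auto intro: INF_superset_mono)
  finally show ?thesis .
qed

text \<open>By \<open>expansions_bounds\<close>, the window of this radius centred at \<open>expansion_radius p q n - 1/2\<close>
  contains all expansions with \<open>n\<close> digits.\<close>
definition expansion_radius :: "nat \<Rightarrow> nat \<Rightarrow> nat \<Rightarrow> real" where
  "expansion_radius p q n = ((real q - 1) / (real p - 1) * (real p ^ n - 1) + 1) / 2"

lemma card_window_canonical_set_ge:
  fixes p q n :: nat
  assumes q: "2 \<le> q" "q < p" and n: "n \<ge> 1"
  defines "h \<equiv> expansion_radius p q n"
  shows "real q ^ n \<le> real (card (real_of_int ` canonical_set p q \<inter> {h - 1 / 2 - h <..< h - 1 / 2 + h}))"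
proof -
  define X where "X = (real q - 1) / (real p - 1) * (real p ^ n - 1)"
  have "h = (X + 1) / 2" by (simp add: h_def expansion_radius_def X_def)
  then have "h - 1 / 2 + h = X + 1 / 2" by simp
  then have window: "{h - 1 / 2 - h <..< h - 1 / 2 + h} = {- 1 / 2 <..< X + 1 / 2}"
    by (simp add: add.commute)
  define W where "W = real_of_int ` canonical_set p q \<inter> {- 1 / 2 <..< X + 1 / 2}"
  have "W \<subseteq> real_of_int ` {\<lfloor>- 1 / 2 :: real\<rfloor>..\<lceil>X + 1 / 2\<rceil>}"
    unfolding W_def by (auto simp: floor_le_iff le_ceiling_iff intro!: imageI)
  then have fin: "finite W" by (rule finite_subset) simp
  have "real_of_int ` expansions p q n \<subseteq> W"
  proof
    fix w assume "w \<in> real_of_int ` expansions p q n"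
    then obtain z where z: "z \<in> expansions p q n" "w = real_of_int z" by blast
    then have "0 \<le> z" "real_of_int z \<le> X" "z \<in> canonical_set p q"
      using expansions_bounds[OF q z(1)] expansions_subset_canonical_set[OF n] by (auto simp: X_def)
    then show "w \<in> W" unfolding W_def z(2) by auto
  qed
  from card_mono[OF fin this] have "card (real_of_int ` expansions p q n) \<le> card W" .
  moreover have "card (real_of_int ` expansions p q n) = q ^ n"
    using card_expansions[of q p n] q by (simp add: card_image inj_on_def)
  ultimately show ?thesis unfolding window W_def by (metis of_nat_le_iff of_nat_power)
qed

lemma expansion_radius_pos:
  assumes "2 \<le> q" "q < p"
  shows "0 < expansion_radius p q n"
  using assms unfolding expansion_radius_def
  by (intro divide_pos_pos add_nonneg_pos mult_nonneg_nonneg) (auto simp: one_le_power)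

lemma filterlim_expansion_radius:
  assumes "2 \<le> q" "q < p"
  shows "filterlim (expansion_radius p q) at_top sequentially"
proof (rule filterlim_at_top_mono)
  define c where "c = (real q - 1) / (real p - 1)"
  have c: "0 < c" "c \<le> 1" using assms by (simp_all add: c_def)
  show "filterlim (\<lambda>n. c / 2 * real n) at_top sequentially"
    using c by (intro filterlim_tendsto_pos_mult_at_top[OF tendsto_const] filterlim_real_sequentially) auto
  have "c / 2 * real n \<le> expansion_radius p q n" for n
  proof -
    have "n < 2 ^ n" by (rule less_exp)
    also have "(2::nat) ^ n \<le> p ^ n" using assms by (intro power_mono) auto
    finally have "real n \<le> real p ^ n" by (metis less_imp_le of_nat_le_iff of_nat_power)
    then have "c / 2 * real n \<le> c / 2 * real p ^ n" using c by (intro mult_left_mono) auto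
    moreover have "expansion_radius p q n = c / 2 * real p ^ n + (1 - c) / 2"
      by (simp add: expansion_radius_def c_def[symmetric] field_simps)
    moreover have "0 \<le> (1 - c) / 2" using c by simp
    ultimately show ?thesis by (simp add: add_increasing2)
  qed
  then show "eventually (\<lambda>n. c / 2 * real n \<le> expansion_radius p q n) sequentially"
    by (simp add: always_eventually)
qed

lemma tendsto_expansions_density:
  fixes p q :: nat
  assumes q: "2 \<le> q" "q < p"
  defines "s \<equiv> ln (real q) / ln (real p)"
  shows "(\<lambda>n. real q ^ n / expansion_radius p q n powr s)
           \<longlonglongrightarrow> (2 * (real p - 1) / (real q - 1)) powr s"
proof -
  define c where "c = (real q - 1) / (real p - 1)"
  have c: "0 < c" "c \<le> 1" using q by (simp_all add: c_def)
  have "real q ^ n / expansion_radius p q n powr s = (2 / (c + (1 - c) * (1 / real p) ^ n)) powr s"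
    for n
  proof -
    have "real q ^ n = (real p ^ n) powr s"
      using q by (simp add: s_def powr_realpow[symmetric] powr_powr powr_def mult.commute)
    also have "\<dots> / expansion_radius p q n powr s = (real p ^ n / expansion_radius p q n) powr s"
      using expansion_radius_pos[OF q, of n] by (simp add: powr_divide)
    also have "real p ^ n / expansion_radius p q n = 2 / (c + (1 - c) * (1 / real p) ^ n)"
      using q by (simp add: expansion_radius_def c_def[symmetric] field_simps power_divide)
    finally show ?thesis .
  qed
  moreover have "(\<lambda>n. (2 / (c + (1 - c) * (1 / real p) ^ n)) powr s)
                   \<longlonglongrightarrow> (2 / (c + (1 - c) * 0)) powr s"
    using q c by (intro tendsto_intros LIMSEQ_realpow_zero) auto
  moreover have "2 / c = 2 * (real p - 1) / (real q - 1)" by (simp add: c_def)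
  ultimately show ?thesis by simp
qed

lemma upper_beurling_density_canonical_set_ge:
  fixes p q :: nat
  assumes q: "2 \<le> q" "q < p"
  defines "s \<equiv> ln (real q) / ln (real p)"
  shows "ereal ((2 * (real p - 1) / (real q - 1)) powr s)
           \<le> upper_beurling_density s (real_of_int ` canonical_set p q)"
  unfolding upper_beurling_density_def
proof (rule Limsup_ge_limit_along[OF filterlim_expansion_radius[OF q] trivial_limit_sequentially])
  show "(\<lambda>n. ereal (real q ^ n / expansion_radius p q n powr s))
          \<longlonglongrightarrow> ereal ((2 * (real p - 1) / (real q - 1)) powr s)"
    unfolding s_def by (intro tendsto_ereal tendsto_expansions_density[OF q])
  show "eventually (\<lambda>n. ereal (real q ^ n / expansion_radius p q n powr s)
          \<le> (SUP x. ereal (real (card (real_of_int ` canonical_set p q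
                \<inter> {x - expansion_radius p q n <..< x + expansion_radius p q n}))
                / expansion_radius p q n powr s))) sequentially"
    using eventually_ge_at_top[of 1]
  proof eventually_elim
    case (elim n)
    define h where "h = expansion_radius p q n"
    have "h > 0" unfolding h_def by (rule expansion_radius_pos[OF q])
    then have "real q ^ n / h powr s
                 \<le> real (card (real_of_int ` canonical_set p q \<inter> {h - 1/2 - h <..< h - 1/2 + h})) / h powr s"
      unfolding h_def using card_window_canonical_set_ge[OF q elim] by (intro divide_right_mono) simp_all
    also have "ereal \<dots> \<le> (SUP x. ereal (real (card (real_of_int ` canonical_set p q \<inter> {x - h <..< x + h}))
                          / h powr s))"
      by (rule SUP_upper) simp
    finally show ?case unfolding h_def by simp
  qed
qed

theorem theorem1p5:
  fixes p q :: nat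
  assumes "2 \<le> q" and "q < p" and "q dvd p"
  defines "s \<equiv> ln (real q) / ln (real p)"
  shows "(\<forall>\<tau>. regular_mapping p q \<tau> \<longrightarrow>
           upper_beurling_density s (real_of_int ` Lambda_tau p q \<tau>)
             \<le> ereal ((2 * (real p - 1) / (real q - 1)) powr s))
       \<and> upper_beurling_density s (real_of_int ` canonical_set p q)
             = ereal ((2 * (real p - 1) / (real q - 1)) powr s)"
proof -
  have "upper_beurling_density s (real_of_int ` Lambda_tau p q \<tau>)
          \<le> ereal ((2 * (real p - 1) / (real q - 1)) powr s)" if "regular_mapping p q \<tau>" for \<tau>
    unfolding Lambda_tau_def s_def
    using upper_beurling_density_le[OF assms(1-3) regular_mapping_imp_weakly_regular[OF that]] by simp
  moreover have "upper_beurling_density s (real_of_int ` canonical_set p q)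
          \<le> ereal ((2 * (real p - 1) / (real q - 1)) powr s)"
    unfolding s_def
    using upper_beurling_density_le[OF assms(1-3)
        regular_mapping_imp_weakly_regular[OF regular_mapping_last_letter[OF assms(2)]]
        canonical_set_subset_Lambda_tau[OF assms(2), unfolded Lambda_tau_def]] .
  moreover have "ereal ((2 * (real p - 1) / (real q - 1)) powr s)
          \<le> upper_beurling_density s (real_of_int ` canonical_set p q)"
    unfolding s_def by (rule upper_beurling_density_canonical_set_ge[OF assms(1,2)])
  ultimately show ?thesis by (auto intro: antisym)
qed

end
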